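(* Let $d\ge 1$ and let $s$ be an odd integer with $1<s<2^d$. Then $\lambda^*(d,s)\le \frac12$.
   Context: For integers $n\ge d\ge 1$, a $d$-flat in $\mathbb{F}_2^n$ is a set $x_0+U$ with $x_0\in\mathbb{F}_2^n$ and $U$ a $d$-dimensional linear subspace of $\mathbb{F}_2^n$. For $A\subseteq\mathbb{F}_2^n$ and an integer $0\le s\le 2^d$, $\lambda^*(n,d,s,A)$ denotes the fraction of $d$-flats $Q$ in $\mathbb{F}_2^n$ with $|Q\cap A|=s$. Let $\lambda^*(n,d,s)=\max_{A\subseteq\mathbb{F}_2^n}\lambda^*(n,d,s,A)$; this is non-increasing in $n$, and $\lambda^*(d,s)=\lim_{n\to\infty}\lambda^*(n,d,s)$. *)

theory Defs
  imports Complex_Main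
begin

text \<open>Vectors of F_2^n are represented by their supports, i.e. subsets of {..<n};
  vector addition is symmetric difference.\<close>

definition cube :: "nat \<Rightarrow> nat set set" where
  "cube n = Pow {..<n}"

definition vadd :: "nat set \<Rightarrow> nat set \<Rightarrow> nat set" where
  "vadd x y = (x - y) \<union> (y - x)"

definition vsum :: "nat set set \<Rightarrow> nat set" where
  "vsum S = {i. odd (card {v \<in> S. i \<in> v})}"

definition lin_indep :: "nat set set \<Rightarrow> bool" where
  "lin_indep B \<longleftrightarrow> finite B \<and> (\<forall>S \<subseteq> B. S \<noteq> {} \<longrightarrow> vsum S \<noteq> {})"

definition span2 :: "nat set set \<Rightarrow> nat set set" where
  "span2 B = vsum ` Pow B"

definition subspace_dim :: "nat \<Rightarrow> nat \<Rightarrow> nat set set \<Rightarrow> bool" where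
  "subspace_dim n d U \<longleftrightarrow>
     (\<exists>B. B \<subseteq> cube n \<and> lin_indep B \<and> card B = d \<and> U = span2 B)"

definition flats :: "nat \<Rightarrow> nat \<Rightarrow> nat set set set" where
  "flats n d = {vadd x0 ` U | x0 U. x0 \<in> cube n \<and> subspace_dim n d U}"

definition lambda_A :: "nat \<Rightarrow> nat \<Rightarrow> nat \<Rightarrow> nat set set \<Rightarrow> real" where
  "lambda_A n d s A =
     real (card {Q \<in> flats n d. card (Q \<inter> A) = s}) / real (card (flats n d))"

definition lambda_n :: "nat \<Rightarrow> nat \<Rightarrow> nat \<Rightarrow> real" where
  "lambda_n n d s = Max ((\<lambda>A. lambda_A n d s A) ` Pow (cube n))"

definition lambda_star :: "nat \<Rightarrow> nat \<Rightarrow> real" where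
  "lambda_star d s = lim (\<lambda>n. lambda_n n d s)"

end

theory Submission
  imports Defs "HOL-Library.FuncSet" "HOL-Real_Asymp.Real_Asymp"
begin

text \<open>
  The affine group of F_2^n acts transitively on d-flats, so for any finite family of d-flats,
  lambda_A is the average over affine automorphisms g of the fraction of the family whose image
  under g meets A in exactly s points. Take as family the unions of two distinct cosets x + W and
  y + W of a fixed (d-1)-dimensional coordinate subspace W, which has K = 2^(n-d+1) cosets.
  Writing a(x) = |g(x + W) \<inter> A|, a pair is counted only if a(x) + a(y) = s; as s is odd, one
  of the two cosets lies in Lo = {x. 2 a(x) < s} and the other in Hi = {x. 2 a(x) > s}. Hence at
  most 2 |Lo| |Hi| \<le> K^2/2 of the K(K-1) ordered pairs are counted, so lambda_A \<le> K/(2(K-1)),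
  which tends to 1/2 as n grows. The same averaging, applied to the d-flats of F_2^n viewed
  inside F_2^(n+1), shows that lambda_n is non-increasing in n, so the limit lambda_star exists.
\<close>

section \<open>Finite combinatorics\<close>

lemma bij_betw_extend:
  assumes "finite C" "finite C'" "B \<subseteq> C" "B' \<subseteq> C'" "card B = card B'" "card C = card C'"
  obtains \<sigma> where "bij_betw \<sigma> C C'" "\<sigma> ` B = B'"
proof -
  have "finite B" "finite B'"
    using assms by (auto intro: finite_subset)
  then obtain f where f: "bij_betw f B B'"
    using assms(5) finite_same_card_bij by blast
  have "card (C - B) = card (C' - B')"
    using assms \<open>finite B\<close> \<open>finite B'\<close> by (simp add: card_Diff_subset)
  then obtain h where h: "bij_betw h (C - B) (C' - B')"
    using assms(1,2) finite_same_card_bij by blast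
  define \<sigma> where "\<sigma> x = (if x \<in> B then f x else h x)" for x
  have "bij_betw \<sigma> B B'"
    using f by (rule bij_betw_cong[THEN iffD1, rotated]) (simp add: \<sigma>_def)
  moreover have "bij_betw \<sigma> (C - B) (C' - B')"
    using h by (rule bij_betw_cong[THEN iffD1, rotated]) (simp add: \<sigma>_def)
  ultimately have "bij_betw \<sigma> (B \<union> (C - B)) (B' \<union> (C' - B'))"
    by (rule bij_betw_combine) blast
  moreover have "B \<union> (C - B) = C" "B' \<union> (C' - B') = C'"
    using assms by auto
  ultimately show ?thesis
    using that \<open>bij_betw \<sigma> B B'\<close> by (simp add: bij_betw_def)
qed

lemma card_Collect_image_mem:
  assumes "finite A" "finite B"
  shows "card {x \<in> A. f x \<in> B} = (\<Sum>y\<in>B. card {x \<in> A. f x = y})"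
proof -
  have "{x \<in> A. f x \<in> B} = (\<Union>y\<in>B. {x \<in> A. f x = y})"
    by blast
  also have "card \<dots> = (\<Sum>y\<in>B. card {x \<in> A. f x = y})"
    using assms by (intro card_UN_disjoint) auto
  finally show ?thesis .
qed

lemma sum_card_Collect_swap:
  assumes "finite A" "finite B"
  shows "(\<Sum>a\<in>A. card {b \<in> B. P a b}) = (\<Sum>b\<in>B. card {a \<in> A. P a b})"
  using assms by (simp add: card_eq_sum sum.inter_filter sum.swap[of _ A] del: sum_constant)

lemma card_off_diagonal:
  assumes "finite X"
  shows "card {(x, y) \<in> X \<times> X. x \<noteq> y} = card X * card X - card X"
proof -
  have "{(x, y) \<in> X \<times> X. x \<noteq> y} = X \<times> X - (\<lambda>x. (x, x)) ` X"
    by auto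
  moreover have "(\<lambda>x. (x, x)) ` X \<subseteq> X \<times> X"
    by auto
  ultimately show ?thesis
    using assms by (simp add: card_Diff_subset card_image inj_on_def card_cartesian_product)
qed

lemma card_image_Un_Int:
  assumes "inj_on g (S \<union> T)" "S \<inter> T = {}" "finite S" "finite T"
  shows "card (g ` (S \<union> T) \<inter> A) = card (g ` S \<inter> A) + card (g ` T \<inter> A)"
proof -
  have "g ` S \<inter> g ` T = {}"
    using inj_on_image_Int[OF assms(1), of S T] assms(2) by auto
  then have "(g ` S \<inter> A) \<inter> (g ` T \<inter> A) = {}"
    by blast
  moreover have "g ` (S \<union> T) \<inter> A = (g ` S \<inter> A) \<union> (g ` T \<inter> A)"
    by auto
  ultimately show ?thesis
    using assms(3,4) by (simp add: card_Un_disjoint)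
qed

lemma card_pairs_odd_sum_le:
  fixes a :: "'a \<Rightarrow> nat"
  assumes X: "finite X" and s: "odd s"
  shows "2 * card {(x, y) \<in> X \<times> X. a x + a y = s} \<le> card X ^ 2"
proof -
  define Lo where "Lo = {x \<in> X. 2 * a x < s}"
  define Hi where "Hi = {x \<in> X. s < 2 * a x}"
  have no_half: "2 * a x \<noteq> s" for x
    using s by auto
  have "(x, y) \<in> Lo \<times> Hi \<union> Hi \<times> Lo" if "x \<in> X" "y \<in> X" "a x + a y = s" for x y
    using that no_half[of x] unfolding Lo_def Hi_def by auto
  then have "{(x, y) \<in> X \<times> X. a x + a y = s} \<subseteq> Lo \<times> Hi \<union> Hi \<times> Lo"
    by auto
  then have "card {(x, y) \<in> X \<times> X. a x + a y = s} \<le> card (Lo \<times> Hi \<union> Hi \<times> Lo)"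
    using X unfolding Lo_def Hi_def by (intro card_mono) auto
  also have "\<dots> \<le> 2 * (card Lo * card Hi)"
    using card_Un_le[of "Lo \<times> Hi" "Hi \<times> Lo"] by (simp add: card_cartesian_product mult.commute)
  finally have pairs: "card {(x, y) \<in> X \<times> X. a x + a y = s} \<le> 2 * (card Lo * card Hi)" .
  have "X = Lo \<union> Hi" "Lo \<inter> Hi = {}"
    unfolding Lo_def Hi_def using no_half by (auto simp: nat_neq_iff)
  then have "card X ^ 2 = (card Lo + card Hi) ^ 2"
    using X by (simp add: card_Un_disjoint)
  moreover have am_gm: "4 * (p * q) \<le> (p + q) ^ 2" for p q :: nat
  proof -
    have "4 * (int p * int q) \<le> (int p + int q) ^ 2"
      using zero_le_power2[of "int p - int q"] by (simp add: power2_eq_square algebra_simps)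
    then have "int (4 * (p * q)) \<le> int ((p + q) ^ 2)"
      by simp
    then show ?thesis
      by (simp only: of_nat_le_iff)
  qed
  ultimately show ?thesis
    using pairs am_gm[of "card Lo" "card Hi"] by linarith
qed

lemma card_block_pairs_odd_le:
  fixes C :: "'a \<Rightarrow> 'b set"
  assumes X: "finite X" and s: "odd s" and g: "inj_on g (\<Union>(C ` X))"
    and fin: "\<And>x. x \<in> X \<Longrightarrow> finite (C x)"
    and disj: "\<And>x y. x \<in> X \<Longrightarrow> y \<in> X \<Longrightarrow> x \<noteq> y \<Longrightarrow> C x \<inter> C y = {}"
  shows "2 * card {p \<in> {(x, y) \<in> X \<times> X. x \<noteq> y}. card (g ` (C (fst p) \<union> C (snd p)) \<inter> A) = s}
    \<le> card X ^ 2"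
proof -
  define a where "a x = card (g ` C x \<inter> A)" for x
  have split: "card (g ` (C x \<union> C y) \<inter> A) = a x + a y" if "x \<in> X" "y \<in> X" "x \<noteq> y" for x y
  proof -
    have "inj_on g (C x \<union> C y)"
      using that by (blast intro: inj_on_subset[OF g])
    then show ?thesis
      unfolding a_def using that by (intro card_image_Un_Int disj fin)
  qed
  have "finite {(x, y) \<in> X \<times> X. a x + a y = s}"
    by (rule finite_subset[of _ "X \<times> X"]) (auto simp: X)
  moreover have "{p \<in> {(x, y) \<in> X \<times> X. x \<noteq> y}. card (g ` (C (fst p) \<union> C (snd p)) \<inter> A) = s}
      \<subseteq> {(x, y) \<in> X \<times> X. a x + a y = s}"
    using split by auto
  ultimately have "card {p \<in> {(x, y) \<in> X \<times> X. x \<noteq> y}. card (g ` (C (fst p) \<union> C (snd p)) \<inter> A) = s}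
      \<le> card {(x, y) \<in> X \<times> X. a x + a y = s}"
    by (rule card_mono)
  with card_pairs_odd_sum_le[OF X s, of a] show ?thesis
    by linarith
qed

section \<open>Vectors and sums\<close>

lemma vadd_commute: "vadd x y = vadd y x"
  unfolding vadd_def by auto

lemma vadd_assoc: "vadd (vadd x y) z = vadd x (vadd y z)"
  unfolding vadd_def by auto

lemma vadd_left_commute: "vadd x (vadd y z) = vadd y (vadd x z)"
  unfolding vadd_def by auto

lemmas vadd_ac = vadd_assoc vadd_commute vadd_left_commute

lemma vadd_self [simp]: "vadd x x = {}"
  and vadd_empty_left [simp]: "vadd {} x = x"
  and vadd_empty_right [simp]: "vadd x {} = x"
  and vadd_vadd_cancel_left [simp]: "vadd x (vadd x y) = y"
  unfolding vadd_def by auto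

lemma vadd_eq_empty_iff: "vadd x y = {} \<longleftrightarrow> x = y"
  unfolding vadd_def by auto

lemma vadd_left_cancel: "vadd x y = vadd x z \<longleftrightarrow> y = z"
  by (metis vadd_vadd_cancel_left)

lemma finite_cube [simp]: "finite (cube n)"
  and card_cube: "card (cube n) = 2 ^ n"
  and empty_in_cube [simp]: "{} \<in> cube n"
  unfolding cube_def by (simp_all add: card_Pow)

lemma vadd_in_cube [simp]: "x \<in> cube n \<Longrightarrow> y \<in> cube n \<Longrightarrow> vadd x y \<in> cube n"
  unfolding cube_def vadd_def by blast

lemma cube_mono: "m \<le> n \<Longrightarrow> cube m \<subseteq> cube n"
  unfolding cube_def by auto

lemma vsum_empty [simp]: "vsum {} = {}"
  unfolding vsum_def by simp

lemma vsum_singleton [simp]: "vsum {v} = v"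
proof -
  have "{u \<in> {v}. i \<in> u} = (if i \<in> v then {v} else {})" for i
    by auto
  then show ?thesis
    unfolding vsum_def by auto
qed

lemma vsum_Un_disjoint:
  assumes "finite S" "finite T" "S \<inter> T = {}"
  shows "vsum (S \<union> T) = vadd (vsum S) (vsum T)"
proof -
  have "card {v \<in> S \<union> T. i \<in> v} = card {v \<in> S. i \<in> v} + card {v \<in> T. i \<in> v}" for i
    using assms by (subst card_Un_disjoint[symmetric]) (auto intro: arg_cong[where f = card])
  then show ?thesis
    unfolding vsum_def vadd_def by auto
qed

lemma vsum_insert: "finite S \<Longrightarrow> v \<notin> S \<Longrightarrow> vsum (insert v S) = vadd v (vsum S)"
  using vsum_Un_disjoint[of "{v}" S] by simp

lemma vsum_sym_diff:
  assumes "finite S" "finite T"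
  shows "vsum ((S - T) \<union> (T - S)) = vadd (vsum S) (vsum T)"
proof -
  have split: "vsum X = vadd (vsum (X - Y)) (vsum (X \<inter> Y))" if "finite X" for X Y :: "nat set set"
    using that vsum_Un_disjoint[of "X - Y" "X \<inter> Y"] by (auto simp: Un_Diff_Int)
  have "vsum ((S - T) \<union> (T - S)) = vadd (vsum (S - T)) (vsum (T - S))"
    using assms by (intro vsum_Un_disjoint) auto
  then show ?thesis
    using split[OF assms(1), of T] split[OF assms(2), of S] by (simp add: Int_commute vadd_ac)
qed

lemma vsum_image_sym_diff:
  assumes "inj_on \<sigma> C" "S \<subseteq> C" "T \<subseteq> C" "finite S" "finite T"
  shows "vsum (\<sigma> ` ((S - T) \<union> (T - S))) = vadd (vsum (\<sigma> ` S)) (vsum (\<sigma> ` T))"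
proof -
  have "\<sigma> ` (S - T) = \<sigma> ` S - \<sigma> ` T" "\<sigma> ` (T - S) = \<sigma> ` T - \<sigma> ` S"
    using assms(2,3) by (auto intro!: inj_on_image_set_diff[OF assms(1)])
  then show ?thesis
    using assms(4,5) by (simp add: image_Un vsum_sym_diff)
qed

lemma vsum_in_cube: "S \<subseteq> cube n \<Longrightarrow> vsum S \<in> cube n"
  unfolding vsum_def cube_def by (force dest: odd_card_imp_not_empty)

section \<open>Spans and bases\<close>

lemma span2_subset_cube: "B \<subseteq> cube n \<Longrightarrow> span2 B \<subseteq> cube n"
  unfolding span2_def using vsum_in_cube by blast

lemma mem_span2_self: "b \<in> B \<Longrightarrow> b \<in> span2 B"
  unfolding span2_def using image_eqI[of b vsum "{b}" "Pow B"] by simp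

lemma span2_insert:
  assumes "finite B" "v \<notin> B"
  shows "span2 (insert v B) = span2 B \<union> vadd v ` span2 B"
proof -
  have "vsum (insert v S) = vadd v (vsum S)" if "S \<in> Pow B" for S
    using assms that by (intro vsum_insert) (auto intro: finite_subset)
  then have "vsum ` insert v ` Pow B = vadd v ` span2 B"
    unfolding span2_def image_image by (auto intro!: image_cong)
  then show ?thesis
    unfolding span2_def Pow_insert image_Un by simp
qed

lemma inj_on_vsum_Pow: "lin_indep B \<Longrightarrow> inj_on vsum (Pow B)"
proof (rule inj_onI)
  fix S T
  assume B: "lin_indep B" and S: "S \<in> Pow B" and T: "T \<in> Pow B" and eq: "vsum S = vsum T"
  then have "finite S" "finite T"
    unfolding lin_indep_def by (auto intro: finite_subset)
  then have "vsum ((S - T) \<union> (T - S)) = {}"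
    using eq by (simp add: vsum_sym_diff)
  moreover have "(S - T) \<union> (T - S) \<subseteq> B"
    using S T by auto
  ultimately have "(S - T) \<union> (T - S) = {}"
    using B unfolding lin_indep_def by blast
  then show "S = T"
    by blast
qed

lemma finite_span2: "lin_indep B \<Longrightarrow> finite (span2 B)"
  unfolding span2_def lin_indep_def by simp

lemma card_span2: "lin_indep B \<Longrightarrow> card (span2 B) = 2 ^ card B"
  unfolding span2_def
  by (simp add: card_image inj_on_vsum_Pow card_Pow lin_indep_def)

lemma lin_indep_insert:
  assumes B: "lin_indep B" and v: "v \<notin> span2 B"
  shows "lin_indep (insert v B)"
  unfolding lin_indep_def
proof (intro conjI allI impI)
  show "finite (insert v B)"
    using B unfolding lin_indep_def by simp
  fix S
  assume S: "S \<subseteq> insert v B" "S \<noteq> {}"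
  show "vsum S \<noteq> {}"
  proof (cases "v \<in> S")
    case True
    have "finite (S - {v})"
      using B S unfolding lin_indep_def by (auto intro: finite_subset)
    then have "vsum S = vadd v (vsum (S - {v}))"
      using True vsum_insert[of "S - {v}" v] by (simp add: insert_absorb)
    moreover have "vsum (S - {v}) \<in> span2 B"
      unfolding span2_def using S by auto
    ultimately show ?thesis
      using v by (metis vadd_eq_empty_iff)
  next
    case False
    then show ?thesis
      using B S unfolding lin_indep_def by blast
  qed
qed

lemma card_le_of_lin_indep:
  assumes "B \<subseteq> cube n" "lin_indep B"
  shows "card B \<le> n"
proof -
  have "card (span2 B) \<le> card (cube n)"
    using assms(1) by (intro card_mono span2_subset_cube) simp_all
  then show ?thesis
    using assms(2) by (simp add: card_span2 card_cube)
qed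

lemma span2_eq_cube: "B \<subseteq> cube n \<Longrightarrow> lin_indep B \<Longrightarrow> card B = n \<Longrightarrow> span2 B = cube n"
  by (intro card_subset_eq span2_subset_cube) (simp_all add: card_span2 card_cube)

lemma lin_indep_extend_basis:
  assumes "B \<subseteq> cube n" "lin_indep B"
  shows "\<exists>C. B \<subseteq> C \<and> C \<subseteq> cube n \<and> lin_indep C \<and> card C = n"
  using assms
proof (induction "n - card B" arbitrary: B rule: less_induct)
  case less
  show ?case
  proof (cases "card B = n")
    case True
    then show ?thesis
      using less.prems by blast
  next
    case False
    then have "card B < n"
      using card_le_of_lin_indep[OF less.prems] by simp
    then have "card (span2 B) < card (cube n)"
      using less.prems(2) by (simp add: card_span2 card_cube)
    then have "\<not> cube n \<subseteq> span2 B"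
      using card_mono[OF finite_span2[OF less.prems(2)], of "cube n"] by linarith
    then obtain v where v: "v \<in> cube n" "v \<notin> span2 B"
      by blast
    have "v \<notin> B" "finite B"
      using v(2) mem_span2_self less.prems(2) unfolding lin_indep_def by auto
    then have "n - card (insert v B) < n - card B"
      using \<open>card B < n\<close> by simp
    then obtain C where "insert v B \<subseteq> C" "C \<subseteq> cube n" "lin_indep C" "card C = n"
      using less.hyps[of "insert v B"] v less.prems lin_indep_insert by blast
    then show ?thesis
      by blast
  qed
qed

definition unit_vectors :: "nat set \<Rightarrow> nat set set" where
  "unit_vectors J = (\<lambda>i. {i}) ` J"

lemma vsum_unit_vectors: "finite J \<Longrightarrow> vsum (unit_vectors J) = J"
proof -
  have "{v \<in> unit_vectors J. i \<in> v} = (if i \<in> J then {{i}} else {})" for i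
    unfolding unit_vectors_def by auto
  then show ?thesis
    unfolding vsum_def by auto
qed

lemma Pow_unit_vectors: "Pow (unit_vectors J) = unit_vectors ` Pow J"
  unfolding unit_vectors_def by (rule image_Pow_surj[symmetric]) simp

lemma span2_unit_vectors: "finite J \<Longrightarrow> span2 (unit_vectors J) = Pow J"
proof -
  assume "finite J"
  then have "vsum (unit_vectors K) = K" if "K \<in> Pow J" for K
    using that by (metis PowD finite_subset vsum_unit_vectors)
  then show ?thesis
    unfolding span2_def Pow_unit_vectors image_image by simp
qed

lemma card_unit_vectors: "card (unit_vectors J) = card J"
  unfolding unit_vectors_def by (simp add: card_image)

lemma lin_indep_unit_vectors: "finite J \<Longrightarrow> lin_indep (unit_vectors J)"
  unfolding lin_indep_def
proof (intro conjI allI impI)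
  assume J: "finite J"
  then show "finite (unit_vectors J)"
    unfolding unit_vectors_def by simp
  fix S
  assume "S \<subseteq> unit_vectors J" "S \<noteq> {}"
  then have "S \<in> unit_vectors ` Pow J"
    using Pow_unit_vectors[of J] by blast
  then obtain K where "K \<subseteq> J" "S = unit_vectors K"
    by blast
  moreover from this have "K \<noteq> {}"
    using \<open>S \<noteq> {}\<close> unfolding unit_vectors_def by blast
  ultimately show "vsum S \<noteq> {}"
    using J by (simp add: vsum_unit_vectors finite_subset)
qed

lemma unit_vectors_subset_cube: "J \<subseteq> {..<n} \<Longrightarrow> unit_vectors J \<subseteq> cube n"
  unfolding unit_vectors_def cube_def by auto

section \<open>Flats\<close>

lemma mem_flats_iff:
  "Q \<in> flats n d \<longleftrightarrow>
    (\<exists>x0 B. x0 \<in> cube n \<and> B \<subseteq> cube n \<and> lin_indep B \<and> card B = d \<and> Q = vadd x0 ` span2 B)"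
  unfolding flats_def subspace_dim_def by blast

lemma flat_subset_cube: "Q \<in> flats n d \<Longrightarrow> Q \<subseteq> cube n"
  unfolding mem_flats_iff using span2_subset_cube vadd_in_cube by blast

lemma finite_flats: "finite (flats n d)"
proof (rule finite_subset)
  show "flats n d \<subseteq> Pow (cube n)"
    using flat_subset_cube by blast
qed simp

lemma flats_mono:
  assumes "m \<le> n"
  shows "flats m d \<subseteq> flats n d"
proof
  fix Q
  assume "Q \<in> flats m d"
  then obtain x0 B where "x0 \<in> cube m" "B \<subseteq> cube m" "lin_indep B" "card B = d" "Q = vadd x0 ` span2 B"
    unfolding mem_flats_iff by blast
  moreover have "cube m \<subseteq> cube n"
    using assms by (rule cube_mono)
  ultimately show "Q \<in> flats n d"
    unfolding mem_flats_iff by blast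
qed

lemma flats_nonempty:
  assumes "d \<le> n"
  shows "flats n d \<noteq> {}"
proof -
  have "unit_vectors {..<d} \<subseteq> cube n"
    using assms by (intro unit_vectors_subset_cube) auto
  moreover have "lin_indep (unit_vectors {..<d})" "card (unit_vectors {..<d}) = d"
    by (simp_all add: lin_indep_unit_vectors card_unit_vectors)
  ultimately have "vadd {} ` span2 (unit_vectors {..<d}) \<in> flats n d"
    unfolding mem_flats_iff by (intro exI[of _ "{}"] exI[of _ "unit_vectors {..<d}"]) simp
  then show ?thesis
    by blast
qed

lemma cosets_disjoint:
  assumes "\<not> vadd x y \<subseteq> J"
  shows "vadd x ` Pow J \<inter> vadd y ` Pow J = {}"
proof (rule ccontr)
  assume "vadd x ` Pow J \<inter> vadd y ` Pow J \<noteq> {}"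
  then obtain u v where "u \<subseteq> J" "v \<subseteq> J" "vadd x u = vadd y v"
    by blast
  moreover from this have "vadd x y = vadd u v"
    by (metis vadd_ac vadd_vadd_cancel_left)
  ultimately show False
    using assms unfolding vadd_def by blast
qed

lemma coset_pair_in_flats:
  assumes J: "J \<subseteq> {..<n}" and xy: "x \<in> cube n" "y \<in> cube n" "\<not> vadd x y \<subseteq> J"
  shows "vadd x ` Pow J \<union> vadd y ` Pow J \<in> flats n (Suc (card J))"
proof -
  define z where "z = vadd x y"
  define B where "B = insert z (unit_vectors J)"
  have fin: "finite J"
    using J finite_subset by blast
  have z: "z \<notin> span2 (unit_vectors J)"
    using xy(3) fin by (simp add: z_def span2_unit_vectors)
  then have "z \<notin> unit_vectors J"
    using mem_span2_self by blast
  moreover have "finite (unit_vectors J)"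
    unfolding unit_vectors_def using fin by simp
  ultimately have "span2 B = Pow J \<union> vadd z ` Pow J" "card B = Suc (card J)"
    unfolding B_def using fin by (simp_all add: span2_insert span2_unit_vectors card_unit_vectors)
  moreover have "vadd x ` vadd z ` Pow J = vadd y ` Pow J"
    unfolding z_def image_image by (simp flip: vadd_assoc)
  moreover have "B \<subseteq> cube n" "lin_indep B"
    unfolding B_def z_def using xy J fin
    by (simp_all add: unit_vectors_subset_cube lin_indep_insert lin_indep_unit_vectors z[unfolded z_def])
  ultimately show ?thesis
    unfolding mem_flats_iff using xy(1) by (metis image_Un)
qed

lemma
  assumes "k < n" "x \<subseteq> {k..<n}" "y \<subseteq> {k..<n}" "x \<noteq> y"
  shows coordinate_coset_pair_in_flats: "vadd x ` Pow {..<k} \<union> vadd y ` Pow {..<k} \<in> flats n (Suc k)"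
    and coordinate_cosets_disjoint: "vadd x ` Pow {..<k} \<inter> vadd y ` Pow {..<k} = {}"
proof -
  have "vadd x y \<noteq> {}"
    using assms(4) by (simp add: vadd_eq_empty_iff)
  moreover have "vadd x y \<subseteq> {k..<n}"
    using assms(2,3) unfolding vadd_def by auto
  ultimately have "\<not> vadd x y \<subseteq> {..<k}"
    by fastforce
  moreover have "x \<in> cube n" "y \<in> cube n"
    using assms(2,3) unfolding cube_def by auto
  ultimately show "vadd x ` Pow {..<k} \<union> vadd y ` Pow {..<k} \<in> flats n (Suc k)"
    and "vadd x ` Pow {..<k} \<inter> vadd y ` Pow {..<k} = {}"
    using coset_pair_in_flats[of "{..<k}" n x y] cosets_disjoint[of x y "{..<k}"] assms(1) by simp_all
qed

section \<open>Linear and affine automorphisms\<close>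

definition lin_aut :: "nat \<Rightarrow> (nat set \<Rightarrow> nat set) \<Rightarrow> bool" where
  "lin_aut n l \<longleftrightarrow>
     (\<forall>u\<in>cube n. \<forall>v\<in>cube n. l (vadd u v) = vadd (l u) (l v)) \<and>
     inj_on l (cube n) \<and> l ` cube n \<subseteq> cube n"

lemma lin_aut_vadd: "lin_aut n l \<Longrightarrow> u \<in> cube n \<Longrightarrow> v \<in> cube n \<Longrightarrow> l (vadd u v) = vadd (l u) (l v)"
  and lin_aut_inj_on: "lin_aut n l \<Longrightarrow> inj_on l (cube n)"
  and lin_aut_in_cube: "lin_aut n l \<Longrightarrow> u \<in> cube n \<Longrightarrow> l u \<in> cube n"
  unfolding lin_aut_def by blast+

lemma lin_aut_empty: "lin_aut n l \<Longrightarrow> l {} = {}"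
  using lin_aut_vadd[of n l "{}" "{}"] by simp

lemma lin_aut_vsum:
  assumes l: "lin_aut n l" and "finite S" "S \<subseteq> cube n"
  shows "l (vsum S) = vsum (l ` S)"
  using assms(2,3)
proof (induction S rule: finite_induct)
  case empty
  then show ?case
    using lin_aut_empty[OF l] by simp
next
  case (insert b S)
  then have b: "b \<in> cube n" and S: "S \<subseteq> cube n"
    by simp_all
  have "l b \<notin> l ` S"
    using insert.hyps(2) inj_on_image_mem_iff[OF lin_aut_inj_on[OF l] b S] by simp
  then have "vsum (l ` insert b S) = vadd (l b) (vsum (l ` S))"
    using insert.hyps(1) by (simp add: vsum_insert)
  also have "\<dots> = l (vadd b (vsum S))"
    using insert.IH[OF S] lin_aut_vadd[OF l b vsum_in_cube[OF S]] by simp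
  also have "\<dots> = l (vsum (insert b S))"
    using insert.hyps by (simp add: vsum_insert)
  finally show ?case
    by simp
qed

lemma lin_aut_image_span2:
  assumes l: "lin_aut n l" and B: "B \<subseteq> cube n" "finite B"
  shows "l ` span2 B = span2 (l ` B)"
proof -
  have "l (vsum S) = vsum (l ` S)" if "S \<in> Pow B" for S
    using that B by (intro lin_aut_vsum[OF l]) (auto intro: finite_subset)
  then have "l ` span2 B = vsum ` image l ` Pow B"
    unfolding span2_def image_image by simp
  then show ?thesis
    unfolding span2_def by (simp add: image_Pow_surj)
qed

lemma lin_indep_image:
  assumes l: "lin_aut n l" and B: "B \<subseteq> cube n" "lin_indep B"
  shows "lin_indep (l ` B)"
  unfolding lin_indep_def
proof (intro conjI allI impI)
  show "finite (l ` B)"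
    using B unfolding lin_indep_def by simp
  fix T
  assume T: "T \<subseteq> l ` B" "T \<noteq> {}"
  then obtain S where S: "S \<subseteq> B" "T = l ` S"
    by (auto elim: subset_imageE)
  with T have "S \<noteq> {}"
    by blast
  have "finite S"
    using S(1) B(2) unfolding lin_indep_def by (blast intro: finite_subset)
  then have "vsum T = l (vsum S)"
    using S B by (simp add: lin_aut_vsum[OF l])
  moreover have "vsum S \<noteq> {}"
    using S \<open>S \<noteq> {}\<close> B unfolding lin_indep_def by blast
  moreover have "vsum S \<in> cube n"
    using S B by (intro vsum_in_cube) auto
  ultimately show "vsum T \<noteq> {}"
    using inj_onD[OF lin_aut_inj_on[OF l], of "vsum S" "{}"] lin_aut_empty[OF l] by auto
qed

lemma lin_aut_of_basis_bij:
  assumes C: "C \<subseteq> cube n" "lin_indep C" "card C = n"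
    and C': "C' \<subseteq> cube n" "lin_indep C'"
    and \<sigma>: "bij_betw \<sigma> C C'"
  obtains L where "lin_aut n L" "\<And>S. S \<subseteq> C \<Longrightarrow> L (vsum S) = vsum (\<sigma> ` S)"
proof
  define L where "L v = vsum (\<sigma> ` inv_into (Pow C) vsum v)" for v
  have \<sigma>_inj: "inj_on \<sigma> C" and \<sigma>_img: "\<sigma> ` C = C'"
    using \<sigma> unfolding bij_betw_def by simp_all
  have finite_C: "finite C"
    using C(2) unfolding lin_indep_def by simp
  show L_vsum: "L (vsum S) = vsum (\<sigma> ` S)" if "S \<subseteq> C" for S
    unfolding L_def using that inv_into_f_f[OF inj_on_vsum_Pow[OF C(2)]] by simp
  have cube_eq: "cube n = vsum ` Pow C"
    using span2_eq_cube[OF C] unfolding span2_def by simp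
  show "lin_aut n L"
    unfolding lin_aut_def
  proof (intro conjI ballI)
    fix u v
    assume "u \<in> cube n" "v \<in> cube n"
    then obtain S T where S: "S \<subseteq> C" "u = vsum S" and T: "T \<subseteq> C" "v = vsum T"
      unfolding cube_eq by blast
    have fin: "finite S" "finite T"
      using S T finite_C by (auto intro: finite_subset)
    have "L (vadd u v) = L (vsum ((S - T) \<union> (T - S)))"
      using S T fin by (simp add: vsum_sym_diff)
    also have "\<dots> = vsum (\<sigma> ` ((S - T) \<union> (T - S)))"
      using S T by (intro L_vsum) auto
    also have "\<dots> = vadd (vsum (\<sigma> ` S)) (vsum (\<sigma> ` T))"
      by (rule vsum_image_sym_diff[OF \<sigma>_inj S(1) T(1) fin])
    also have "\<dots> = vadd (L u) (L v)"
      using S T L_vsum by simp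
    finally show "L (vadd u v) = vadd (L u) (L v)" .
  next
    show "inj_on L (cube n)"
    proof (rule inj_onI)
      fix u v
      assume "u \<in> cube n" "v \<in> cube n" and eq: "L u = L v"
      then obtain S T where S: "S \<subseteq> C" "u = vsum S" and T: "T \<subseteq> C" "v = vsum T"
        unfolding cube_eq by blast
      have "vsum (\<sigma> ` S) = vsum (\<sigma> ` T)"
        using eq S T L_vsum by simp
      then have "\<sigma> ` S = \<sigma> ` T"
        using S T \<sigma>_img by (intro inj_onD[OF inj_on_vsum_Pow[OF C'(2)]]) auto
      then show "u = v"
        using S T inj_on_image_eq_iff[OF \<sigma>_inj] by simp
    qed
  next
    show "L ` cube n \<subseteq> cube n"
    proof
      fix w
      assume "w \<in> L ` cube n"
      then obtain S where "S \<subseteq> C" "w = vsum (\<sigma> ` S)"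
        unfolding cube_eq using L_vsum by auto
      moreover have "\<sigma> ` S \<subseteq> cube n"
        using \<open>S \<subseteq> C\<close> \<sigma>_img C'(1) by blast
      ultimately show "w \<in> cube n"
        by (simp add: vsum_in_cube)
    qed
  qed
qed

lemma lin_aut_mapping_span2:
  assumes B: "B \<subseteq> cube n" "lin_indep B" and B': "B' \<subseteq> cube n" "lin_indep B'"
    and card: "card B = card B'"
  obtains L where "lin_aut n L" "L ` span2 B = span2 B'"
proof -
  obtain C where C: "B \<subseteq> C" "C \<subseteq> cube n" "lin_indep C" "card C = n"
    using lin_indep_extend_basis[OF B] by blast
  obtain C' where C': "B' \<subseteq> C'" "C' \<subseteq> cube n" "lin_indep C'" "card C' = n"
    using lin_indep_extend_basis[OF B'] by blast
  have "finite C" "finite C'"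
    using C(3) C'(3) unfolding lin_indep_def by simp_all
  then obtain \<sigma> where \<sigma>: "bij_betw \<sigma> C C'" "\<sigma> ` B = B'"
    using bij_betw_extend[of C C' B B'] C(1,4) C'(1,4) card by auto
  obtain L where L: "lin_aut n L" and L_vsum: "\<And>S. S \<subseteq> C \<Longrightarrow> L (vsum S) = vsum (\<sigma> ` S)"
    using lin_aut_of_basis_bij[OF C(2-4) C'(2,3) \<sigma>(1)] by blast
  have "L ` span2 B = vsum ` image \<sigma> ` Pow B"
    unfolding span2_def image_image using C(1) L_vsum by (intro image_cong) auto
  also have "image \<sigma> ` Pow B = Pow B'"
    using \<sigma>(2) by (rule image_Pow_surj)
  finally show ?thesis
    using L that unfolding span2_def by blast
qed

text \<open>Over F_2 a map is affine iff it preserves sums of three points. The maps are normalised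
  to {} off the cube, which makes affine_auts n finite.\<close>

definition affine_auts :: "nat \<Rightarrow> (nat set \<Rightarrow> nat set) set" where
  "affine_auts n =
     {g. bij_betw g (cube n) (cube n) \<and>
         (\<forall>x\<in>cube n. \<forall>y\<in>cube n. \<forall>z\<in>cube n. g (vadd x (vadd y z)) = vadd (g x) (vadd (g y) (g z))) \<and>
         (\<forall>x. x \<notin> cube n \<longrightarrow> g x = {})}"

definition aff_comp :: "nat \<Rightarrow> (nat set \<Rightarrow> nat set) \<Rightarrow> (nat set \<Rightarrow> nat set) \<Rightarrow> nat set \<Rightarrow> nat set" where
  "aff_comp n g h = (\<lambda>x. if x \<in> cube n then g (h x) else {})"

lemma affine_aut_bij: "g \<in> affine_auts n \<Longrightarrow> bij_betw g (cube n) (cube n)"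
  and affine_aut_vadd3: "g \<in> affine_auts n \<Longrightarrow> x \<in> cube n \<Longrightarrow> y \<in> cube n \<Longrightarrow> z \<in> cube n \<Longrightarrow>
      g (vadd x (vadd y z)) = vadd (g x) (vadd (g y) (g z))"
  and affine_aut_outside: "g \<in> affine_auts n \<Longrightarrow> x \<notin> cube n \<Longrightarrow> g x = {}"
  by (simp_all add: affine_auts_def)

lemma affine_aut_in_cube: "g \<in> affine_auts n \<Longrightarrow> x \<in> cube n \<Longrightarrow> g x \<in> cube n"
  and affine_aut_inj_on: "g \<in> affine_auts n \<Longrightarrow> inj_on g (cube n)"
  and affine_aut_image_cube: "g \<in> affine_auts n \<Longrightarrow> g ` cube n = cube n"
  using affine_aut_bij by (auto simp: bij_betw_def)

lemma affine_auts_eqI: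
  assumes "g \<in> affine_auts n" "h \<in> affine_auts n" "\<And>x. x \<in> cube n \<Longrightarrow> g x = h x"
  shows "g = h"
proof
  show "g x = h x" for x
    using assms by (cases "x \<in> cube n") (simp_all add: affine_aut_outside)
qed

lemma finite_affine_auts: "finite (affine_auts n)"
proof -
  have "inj_on (\<lambda>g. restrict g (cube n)) (affine_auts n)"
  proof (rule inj_onI)
    fix g h
    assume g: "g \<in> affine_auts n" and h: "h \<in> affine_auts n"
      and eq: "restrict g (cube n) = restrict h (cube n)"
    show "g = h"
    proof (rule affine_auts_eqI[OF g h])
      show "g x = h x" if "x \<in> cube n" for x
        using that fun_cong[OF eq, of x] by simp
    qed
  qed
  moreover have "(\<lambda>g. restrict g (cube n)) ` affine_auts n \<subseteq> cube n \<rightarrow>\<^sub>E cube n"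
    using affine_aut_in_cube by auto
  moreover have "finite (cube n \<rightarrow>\<^sub>E cube n)"
    by (simp add: finite_PiE)
  ultimately show ?thesis
    using finite_imageD finite_subset by blast
qed

lemma aff_comp_in_affine_auts:
  assumes g: "g \<in> affine_auts n" and h: "h \<in> affine_auts n"
  shows "aff_comp n g h \<in> affine_auts n"
proof -
  have "bij_betw (g \<circ> h) (cube n) (cube n)"
    using affine_aut_bij[OF g] affine_aut_bij[OF h] by (rule bij_betw_trans[rotated])
  then have "bij_betw (aff_comp n g h) (cube n) (cube n)"
    by (rule bij_betw_cong[THEN iffD1, rotated]) (simp add: aff_comp_def)
  moreover have "aff_comp n g h (vadd x (vadd y z)) =
      vadd (aff_comp n g h x) (vadd (aff_comp n g h y) (aff_comp n g h z))"
    if "x \<in> cube n" "y \<in> cube n" "z \<in> cube n" for x y z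
    using that by (simp add: aff_comp_def affine_aut_vadd3[OF h] affine_aut_vadd3[OF g] affine_aut_in_cube[OF h])
  moreover have "aff_comp n g h x = {}" if "x \<notin> cube n" for x
    using that by (simp add: aff_comp_def)
  ultimately show ?thesis
    unfolding affine_auts_def by blast
qed

lemma lin_aut_linear_part:
  assumes g: "g \<in> affine_auts n" and x0: "x0 \<in> cube n"
  shows "lin_aut n (\<lambda>v. vadd (g (vadd x0 v)) (g x0))"
  unfolding lin_aut_def
proof (intro conjI ballI)
  fix u v
  assume u: "u \<in> cube n" and v: "v \<in> cube n"
  have "g (vadd (vadd x0 u) (vadd x0 (vadd x0 v))) = vadd (g (vadd x0 u)) (vadd (g x0) (g (vadd x0 v)))"
    using u v x0 by (intro affine_aut_vadd3[OF g]) simp_all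
  moreover have "vadd (vadd x0 u) (vadd x0 (vadd x0 v)) = vadd x0 (vadd u v)"
    by (simp add: vadd_ac)
  ultimately show "vadd (g (vadd x0 (vadd u v))) (g x0) =
      vadd (vadd (g (vadd x0 u)) (g x0)) (vadd (g (vadd x0 v)) (g x0))"
    by (simp add: vadd_ac)
next
  show "inj_on (\<lambda>v. vadd (g (vadd x0 v)) (g x0)) (cube n)"
  proof (rule inj_onI)
    fix u v
    assume "u \<in> cube n" "v \<in> cube n" "vadd (g (vadd x0 u)) (g x0) = vadd (g (vadd x0 v)) (g x0)"
    then show "u = v"
      using inj_onD[OF affine_aut_inj_on[OF g], of "vadd x0 u" "vadd x0 v"] x0
      by (simp add: vadd_commute[of _ "g x0"] vadd_left_cancel)
  qed
next
  show "(\<lambda>v. vadd (g (vadd x0 v)) (g x0)) ` cube n \<subseteq> cube n"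
    using affine_aut_in_cube[OF g] x0 by auto
qed

lemma affine_aut_image_flat:
  assumes g: "g \<in> affine_auts n" and Q: "Q \<in> flats n d"
  shows "g ` Q \<in> flats n d"
proof -
  obtain x0 B where x0: "x0 \<in> cube n" and B: "B \<subseteq> cube n" "lin_indep B" "card B = d"
    and Q_eq: "Q = vadd x0 ` span2 B"
    using Q unfolding mem_flats_iff by blast
  define l where "l v = vadd (g (vadd x0 v)) (g x0)" for v
  have l: "lin_aut n l"
    unfolding l_def using g x0 by (rule lin_aut_linear_part)
  have "g (vadd x0 v) = vadd (g x0) (l v)" for v
    unfolding l_def by (simp add: vadd_ac)
  then have "g ` Q = vadd (g x0) ` l ` span2 B"
    unfolding Q_eq image_image by simp
  also have "l ` span2 B = span2 (l ` B)"
    using B(2) unfolding lin_indep_def by (intro lin_aut_image_span2[OF l B(1)]) simp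
  finally have "g ` Q = vadd (g x0) ` span2 (l ` B)" .
  moreover have "l ` B \<subseteq> cube n" "lin_indep (l ` B)" "card (l ` B) = d"
    using B lin_aut_in_cube[OF l] lin_indep_image[OF l B(1,2)]
      card_image[OF inj_on_subset[OF lin_aut_inj_on[OF l] B(1)]] by auto
  ultimately show ?thesis
    unfolding mem_flats_iff using affine_aut_in_cube[OF g x0] by blast
qed

lemma affine_aut_of_lin_aut:
  assumes L: "lin_aut n L" and x0: "x0 \<in> cube n" and y0: "y0 \<in> cube n"
  shows "(\<lambda>x. if x \<in> cube n then vadd y0 (L (vadd x0 x)) else {}) \<in> affine_auts n"
    (is "?g \<in> _")
proof -
  have maps: "?g x \<in> cube n" if "x \<in> cube n" for x
    using that x0 y0 lin_aut_in_cube[OF L] by simp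
  have inj: "inj_on ?g (cube n)"
  proof (rule inj_onI)
    fix u v
    assume "u \<in> cube n" "v \<in> cube n" "?g u = ?g v"
    then show "u = v"
      using inj_onD[OF lin_aut_inj_on[OF L], of "vadd x0 u" "vadd x0 v"] x0
      by (simp add: vadd_left_cancel)
  qed
  show ?thesis
    unfolding affine_auts_def bij_betw_def
  proof (intro CollectI conjI ballI allI impI inj)
    show "?g ` cube n = cube n"
      using inj maps by (intro endo_inj_surj) auto
    fix x y z
    assume "x \<in> cube n" "y \<in> cube n" "z \<in> cube n"
    moreover have "vadd x0 (vadd x (vadd y z)) = vadd (vadd x0 x) (vadd (vadd x0 y) (vadd x0 z))"
      by (simp add: vadd_ac)
    ultimately show "?g (vadd x (vadd y z)) = vadd (?g x) (vadd (?g y) (?g z))"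
      using x0 by (simp add: lin_aut_vadd[OF L] vadd_ac)
  qed simp
qed

lemma affine_auts_transitive_on_flats:
  assumes Q: "Q \<in> flats n d" and Q': "Q' \<in> flats n d"
  obtains g where "g \<in> affine_auts n" "g ` Q = Q'"
proof -
  obtain x0 B where x0: "x0 \<in> cube n" and B: "B \<subseteq> cube n" "lin_indep B" "card B = d"
    and Q_eq: "Q = vadd x0 ` span2 B"
    using Q unfolding mem_flats_iff by blast
  obtain y0 B' where y0: "y0 \<in> cube n" and B': "B' \<subseteq> cube n" "lin_indep B'" "card B' = d"
    and Q'_eq: "Q' = vadd y0 ` span2 B'"
    using Q' unfolding mem_flats_iff by blast
  obtain L where L: "lin_aut n L" "L ` span2 B = span2 B'"
    using lin_aut_mapping_span2[OF B(1,2) B'(1,2)] B(3) B'(3) by metis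
  define g where "g x = (if x \<in> cube n then vadd y0 (L (vadd x0 x)) else {})" for x
  have "g \<in> affine_auts n"
    unfolding g_def using L(1) x0 y0 by (rule affine_aut_of_lin_aut)
  moreover have "g ` Q = vadd y0 ` L ` span2 B"
    unfolding Q_eq image_image g_def using x0 span2_subset_cube[OF B(1)]
    by (intro image_cong) auto
  ultimately show ?thesis
    using that unfolding Q'_eq L(2) by blast
qed

section \<open>Averaging over the affine group\<close>

definition transporters :: "nat \<Rightarrow> nat set set \<Rightarrow> nat set set \<Rightarrow> (nat set \<Rightarrow> nat set) set" where
  "transporters n Q Q' = {g \<in> affine_auts n. g ` Q = Q'}"

lemma card_transporters_le:
  assumes "Q \<in> flats n d" "Q' \<in> flats n d" "P \<in> flats n d" "P' \<in> flats n d"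
  shows "card (transporters n Q Q') \<le> card (transporters n P P')"
proof -
  obtain h where h: "h \<in> affine_auts n" "h ` P = Q"
    using affine_auts_transitive_on_flats[OF assms(3,1)] by blast
  obtain k where k: "k \<in> affine_auts n" "k ` Q' = P'"
    using affine_auts_transitive_on_flats[OF assms(2,4)] by blast
  define \<phi> where "\<phi> g = aff_comp n k (aff_comp n g h)" for g
  have "inj_on \<phi> (transporters n Q Q')"
  proof (rule inj_onI)
    fix g1 g2
    assume "g1 \<in> transporters n Q Q'" "g2 \<in> transporters n Q Q'" and eq: "\<phi> g1 = \<phi> g2"
    then have g1: "g1 \<in> affine_auts n" and g2: "g2 \<in> affine_auts n"
      unfolding transporters_def by simp_all
    show "g1 = g2"
    proof (rule affine_auts_eqI[OF g1 g2])
      fix y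
      assume y: "y \<in> cube n"
      then obtain x where x: "x \<in> cube n" "y = h x"
        using affine_aut_image_cube[OF h(1)] by blast
      have "k (g1 y) = k (g2 y)"
        using fun_cong[OF eq, of x] x affine_aut_in_cube[OF h(1)] by (simp add: \<phi>_def aff_comp_def)
      then show "g1 y = g2 y"
        using y inj_onD[OF affine_aut_inj_on[OF k(1)]] affine_aut_in_cube[OF g1] affine_aut_in_cube[OF g2]
        by blast
    qed
  qed
  moreover have "\<phi> ` transporters n Q Q' \<subseteq> transporters n P P'"
  proof
    fix g'
    assume "g' \<in> \<phi> ` transporters n Q Q'"
    then obtain g where g: "g \<in> affine_auts n" "g ` Q = Q'" and g': "g' = \<phi> g"
      unfolding transporters_def by blast
    have "g' ` P = k ` g ` h ` P"
      unfolding g' \<phi>_def image_image aff_comp_def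
      using flat_subset_cube[OF assms(3)] affine_aut_in_cube[OF h(1)] by (intro image_cong) auto
    then show "g' \<in> transporters n P P'"
      unfolding transporters_def \<phi>_def g' using g h k by (simp add: aff_comp_in_affine_auts)
  qed
  moreover have "finite (transporters n P P')"
    unfolding transporters_def using finite_affine_auts by simp
  ultimately show ?thesis
    by (rule card_inj_on_le)
qed

lemma card_transporters_eq:
  assumes "Q \<in> flats n d" "Q' \<in> flats n d" "P \<in> flats n d" "P' \<in> flats n d"
  shows "card (transporters n Q Q') = card (transporters n P P')"
  using card_transporters_le[OF assms] card_transporters_le[OF assms(3,4,1,2)] by simp

lemma card_transporters_pos:
  assumes "Q \<in> flats n d" "Q' \<in> flats n d"
  shows "card (transporters n Q Q') > 0"
proof -
  obtain g where "g \<in> affine_auts n" "g ` Q = Q'"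
    using affine_auts_transitive_on_flats[OF assms] by blast
  then show ?thesis
    unfolding transporters_def using finite_affine_auts by (auto simp: card_gt_0_iff)
qed

lemma card_affine_auts_mapping_into:
  assumes Q: "Q \<in> flats n d" and \<Q>: "\<Q> \<subseteq> flats n d"
  shows "card {g \<in> affine_auts n. g ` Q \<in> \<Q>} = card \<Q> * card (transporters n Q Q)"
proof -
  have "card {g \<in> affine_auts n. g ` Q \<in> \<Q>} = (\<Sum>P\<in>\<Q>. card (transporters n Q P))"
    unfolding transporters_def
    by (rule card_Collect_image_mem[OF finite_affine_auts finite_subset[OF \<Q> finite_flats]])
  also have "\<dots> = (\<Sum>P\<in>\<Q>. card (transporters n Q Q))"
    using Q \<Q> by (intro sum.cong refl card_transporters_eq) auto
  finally show ?thesis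
    by simp
qed

text \<open>By transitivity each flat is the image of each F i under equally many g, so counting
  pairs (g, i) recovers lambda_A.\<close>

lemma lambda_A_le_by_averaging:
  fixes F :: "'i \<Rightarrow> nat set set"
  assumes I: "finite I" "I \<noteq> {}" and F: "\<And>i. i \<in> I \<Longrightarrow> F i \<in> flats n d"
    and bound: "\<And>g. g \<in> affine_auts n \<Longrightarrow>
      real (card {i \<in> I. card (g ` F i \<inter> A) = s}) \<le> c * real (card I)"
  shows "lambda_A n d s A \<le> c"
proof -
  obtain i0 where i0: "i0 \<in> I"
    using I(2) by blast
  define t where "t = card (transporters n (F i0) (F i0))"
  have t_eq: "card (transporters n (F i) (F i)) = t" if "i \<in> I" for i
    unfolding t_def using F that i0 by (intro card_transporters_eq) auto
  define good where "good = {Q \<in> flats n d. card (Q \<inter> A) = s}"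
  have count: "card {g \<in> affine_auts n. card (g ` F i \<inter> A) = s} = card good * t" if i: "i \<in> I" for i
  proof -
    have "{g \<in> affine_auts n. card (g ` F i \<inter> A) = s} = {g \<in> affine_auts n. g ` F i \<in> good}"
      unfolding good_def using affine_aut_image_flat[OF _ F[OF i]] by blast
    then show ?thesis
      using card_affine_auts_mapping_into[OF F[OF i], of good] t_eq[OF i] unfolding good_def by simp
  qed
  have "affine_auts n = {g \<in> affine_auts n. g ` F i0 \<in> flats n d}"
    using affine_aut_image_flat[OF _ F[OF i0]] by blast
  then have card_auts: "card (affine_auts n) = card (flats n d) * t"
    using card_affine_auts_mapping_into[OF F[OF i0], of "flats n d"] unfolding t_def by simp
  have "real (card I * (card good * t)) = real (\<Sum>i\<in>I. card {g \<in> affine_auts n. card (g ` F i \<inter> A) = s})"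
    using count by simp
  also have "\<dots> = (\<Sum>g\<in>affine_auts n. real (card {i \<in> I. card (g ` F i \<inter> A) = s}))"
    by (simp add: sum_card_Collect_swap[OF I(1) finite_affine_auts])
  also have "\<dots> \<le> (\<Sum>g\<in>affine_auts n. c * real (card I))"
    using bound by (rule sum_mono)
  also have "\<dots> = real (card I * t) * (c * real (card (flats n d)))"
    using card_auts by simp
  finally have "real (card I * t) * real (card good) \<le> real (card I * t) * (c * real (card (flats n d)))"
    by (simp add: algebra_simps)
  moreover have "card I * t > 0"
    using I card_transporters_pos[OF F[OF i0] F[OF i0]] by (simp add: t_def card_gt_0_iff)
  ultimately have "real (card good) \<le> c * real (card (flats n d))"
    by simp
  moreover have "card (flats n d) > 0"
    using F[OF i0] finite_flats by (auto simp: card_gt_0_iff)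
  ultimately show ?thesis
    unfolding lambda_A_def good_def[symmetric] by (simp add: divide_le_eq)
qed

section \<open>The bound and the limit\<close>

lemma lambda_A_le_coset_pair_bound:
  assumes k: "k < n" and s: "odd s"
  shows "lambda_A n (Suc k) s A \<le> 2 ^ (n - k) / (2 * (2 ^ (n - k) - 1))"
proof -
  define K :: nat where "K = 2 ^ (n - k)"
  define X where "X = Pow {k..<n}"
  define coset where "coset x = vadd x ` Pow {..<k}" for x
  define I where "I = {(x, y) \<in> X \<times> X. x \<noteq> y}"
  define F where "F i = coset (fst i) \<union> coset (snd i)" for i
  have X: "finite X" "card X = K"
    unfolding X_def K_def by (simp_all add: card_Pow)
  have "(2::nat) ^ 1 \<le> 2 ^ (n - k)"
    using k by (intro power_increasing) auto
  then have "K \<ge> 2"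
    unfolding K_def by simp
  have card_I: "real (card I) = real K * (real K - 1)"
    unfolding I_def using card_off_diagonal[OF X(1)] X(2) \<open>K \<ge> 2\<close> by (simp add: of_nat_diff algebra_simps)
  have coset_cube: "\<Union>(coset ` X) \<subseteq> cube n"
    using k unfolding coset_def X_def cube_def vadd_def by auto
  show ?thesis
  proof (rule lambda_A_le_by_averaging[of I F])
    show "finite I"
      by (rule finite_subset[of _ "X \<times> X"]) (auto simp: I_def X(1))
    have "({}, {k}) \<in> I"
      unfolding I_def X_def using k by simp
    then show "I \<noteq> {}"
      by blast
    show "F i \<in> flats n (Suc k)" if "i \<in> I" for i
      using that unfolding F_def coset_def I_def X_def
      by (cases i) (simp add: coordinate_coset_pair_in_flats[OF k])
  next
    fix g
    assume g: "g \<in> affine_auts n"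
    have "inj_on g (\<Union>(coset ` X))"
      using affine_aut_inj_on[OF g] coset_cube by (rule inj_on_subset)
    moreover have "coset x \<inter> coset y = {}" if "x \<in> X" "y \<in> X" "x \<noteq> y" for x y
      using that coordinate_cosets_disjoint[OF k] unfolding coset_def X_def by simp
    ultimately have "2 * card {i \<in> I. card (g ` F i \<inter> A) = s} \<le> card X ^ 2"
      unfolding I_def F_def by (intro card_block_pairs_odd_le X(1) s) (simp_all add: coset_def)
    then have "2 * card {i \<in> I. card (g ` F i \<inter> A) = s} \<le> K * K"
      by (simp add: X(2) power2_eq_square)
    then have "real (card {i \<in> I. card (g ` F i \<inter> A) = s}) \<le> real K * real K / 2"
      by (simp flip: of_nat_mult of_nat_le_iff)
    also have "\<dots> = real K / (2 * (real K - 1)) * real (card I)"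
      using \<open>K \<ge> 2\<close> unfolding card_I by (simp add: field_simps)
    finally show "real (card {i \<in> I. card (g ` F i \<inter> A) = s}) \<le>
        2 ^ (n - k) / (2 * (2 ^ (n - k) - 1)) * real (card I)"
      by (simp add: K_def)
  qed
qed

lemma lambda_A_le_lambda_n: "A \<subseteq> cube n \<Longrightarrow> lambda_A n d s A \<le> lambda_n n d s"
  unfolding lambda_n_def by (intro Max_ge) auto

lemma lambda_n_le: "(\<And>A. A \<subseteq> cube n \<Longrightarrow> lambda_A n d s A \<le> c) \<Longrightarrow> lambda_n n d s \<le> c"
  unfolding lambda_n_def by (intro Max.boundedI) auto

lemma lambda_n_nonneg: "0 \<le> lambda_n n d s"
proof -
  have "0 \<le> lambda_A n d s {}"
    by (simp add: lambda_A_def)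
  also have "\<dots> \<le> lambda_n n d s"
    by (rule lambda_A_le_lambda_n) simp
  finally show ?thesis .
qed

lemma lambda_n_Suc_le:
  assumes "d \<le> n"
  shows "lambda_n (Suc n) d s \<le> lambda_n n d s"
proof (rule lambda_n_le)
  fix A
  show "lambda_A (Suc n) d s A \<le> lambda_n n d s"
  proof (rule lambda_A_le_by_averaging[of "flats n d" id])
    show "finite (flats n d)" "flats n d \<noteq> {}"
      using assms by (simp_all add: finite_flats flats_nonempty)
    show "id Q \<in> flats (Suc n) d" if "Q \<in> flats n d" for Q
      using that flats_mono[of n "Suc n" d] by auto
  next
    fix g
    assume g: "g \<in> affine_auts (Suc n)"
    define A' where "A' = {x \<in> cube n. g x \<in> A}"
    have restrict: "card (g ` Q \<inter> A) = card (Q \<inter> A')" if "Q \<in> flats n d" for Q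
    proof -
      have "Q \<subseteq> cube n" "cube n \<subseteq> cube (Suc n)"
        using flat_subset_cube[OF that] cube_mono[of n "Suc n"] by simp_all
      then have "inj_on g (Q \<inter> A')"
        by (blast intro: inj_on_subset[OF affine_aut_inj_on[OF g]])
      moreover have "g ` Q \<inter> A = g ` (Q \<inter> A')"
        unfolding A'_def using \<open>Q \<subseteq> cube n\<close> by auto
      ultimately show ?thesis
        by (simp add: card_image)
    qed
    have "{Q \<in> flats n d. card (g ` id Q \<inter> A) = s} = {Q \<in> flats n d. card (Q \<inter> A') = s}"
      by (rule Collect_cong) (metis id_apply restrict)
    then have "real (card {Q \<in> flats n d. card (g ` id Q \<inter> A) = s}) =
        lambda_A n d s A' * real (card (flats n d))"
      using assms finite_flats flats_nonempty[of d n] by (simp add: lambda_A_def card_gt_0_iff)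
    also have "\<dots> \<le> lambda_n n d s * real (card (flats n d))"
      unfolding A'_def by (intro mult_right_mono lambda_A_le_lambda_n) auto
    finally show "real (card {Q \<in> flats n d. card (g ` id Q \<inter> A) = s}) \<le>
        lambda_n n d s * real (card (flats n d))" .
  qed
qed

lemma lambda_n_tendsto_lambda_star: "(\<lambda>n. lambda_n n d s) \<longlonglongrightarrow> lambda_star d s"
proof -
  have "lambda_n (Suc i + d) d s \<le> lambda_n (i + d) d s" for i
    using lambda_n_Suc_le[of d "i + d" s] by simp
  then have "decseq (\<lambda>i. lambda_n (i + d) d s)"
    by (intro decseq_SucI)
  moreover have "\<forall>i. 0 \<le> lambda_n (i + d) d s"
    by (simp add: lambda_n_nonneg)
  ultimately obtain L where "(\<lambda>i. lambda_n (i + d) d s) \<longlonglongrightarrow> L"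
    by (blast elim: decseq_convergent)
  then have "(\<lambda>n. lambda_n n d s) \<longlonglongrightarrow> L"
    by (rule LIMSEQ_offset)
  moreover from this have "lambda_star d s = L"
    unfolding lambda_star_def by (rule limI)
  ultimately show ?thesis
    by simp
qed

theorem theorem1p3:
  fixes d s :: nat
  assumes "d \<ge> 1" and "odd s" and "1 < s" and "s < 2 ^ d"
  shows "lambda_star d s \<le> 1 / 2"
proof -
  obtain k where d: "d = Suc k"
    using assms(1) by (cases d) auto
  have lim: "(\<lambda>m. lambda_n (m + d) d s) \<longlonglongrightarrow> lambda_star d s"
    using lambda_n_tendsto_lambda_star by (rule LIMSEQ_ignore_initial_segment)
  have bound_lim: "(\<lambda>m. 2 ^ Suc m / (2 * (2 ^ Suc m - 1)) :: real) \<longlonglongrightarrow> 1 / 2"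
    by real_asymp
  have bound: "lambda_n (m + d) d s \<le> 2 ^ Suc m / (2 * (2 ^ Suc m - 1))" for m
    using lambda_A_le_coset_pair_bound[of k "m + d" s] assms(2) d by (intro lambda_n_le) simp
  show ?thesis
    by (rule LIMSEQ_le[OF lim bound_lim]) (use bound in blast)
qed

end
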